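(* Let $\mathcal A$ be a finite, union-closed, separating family of sets whose universe $U(\mathcal A)=\bigcup_{A\in\mathcal A}A$ has $m\geq 1$ elements, and suppose $|\mathcal A|\leq 2m$. Then there is an element $x\in U(\mathcal A)$ contained in at least $\tfrac12|\mathcal A|$ member-sets of $\mathcal A$.
   Context: $\mathcal A$ is union-closed if $A\cup B\in\mathcal A$ for all $A,B\in\mathcal A$. $\mathcal A$ is separating if for any two distinct elements $x,y\in U(\mathcal A)$ there is $A\in\mathcal A$ containing exactly one of $x,y$. *)

theory Defs
  imports Main
begin

definition union_closed :: "'a set set \<Rightarrow> bool" where
  "union_closed \<A> \<longleftrightarrow> (\<forall>A\<in>\<A>. \<forall>B\<in>\<A>. A \<union> B \<in> \<A>)"

definition separating :: "'a set set \<Rightarrow> bool" where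
  "separating \<A> \<longleftrightarrow> (\<forall>x\<in>\<Union>\<A>. \<forall>y\<in>\<Union>\<A>. x \<noteq> y \<longrightarrow>
      (\<exists>A\<in>\<A>. (x \<in> A \<and> y \<notin> A) \<or> (y \<in> A \<and> x \<notin> A)))"

end

theory Submission
  imports Defs
begin

text \<open>For each element y of the universe U, let B y be the largest member of the family
avoiding y, the union of all members not containing y. Separation makes y \<mapsto> B y injective.
If x minimises |B x|, then x lies in B y for every y \<noteq> x: otherwise B y \<subseteq> B x, so
B y = B x by minimality, contradicting injectivity. Hence the m - 1 distinct sets B y
(y \<noteq> x) together with U itself are m members containing x, and m \<ge> |\<A>|/2. If instead some
element lies in every member, it is trivially contained in all of them.\<close>

lemma union_closed_Union_mem:
  assumes "union_closed \<A>" and "finite F" "F \<noteq> {}" "F \<subseteq> \<A>"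
  shows "\<Union>F \<in> \<A>"
  using assms(2-4)
proof (induction F rule: finite_ne_induct)
  case (insert A F)
  then show ?case using assms(1) unfolding union_closed_def by simp
qed simp

definition max_avoiding :: "'a set set \<Rightarrow> 'a \<Rightarrow> 'a set" where
  "max_avoiding \<A> y = \<Union>{A \<in> \<A>. y \<notin> A}"

lemma not_mem_max_avoiding: "y \<notin> max_avoiding \<A> y"
  unfolding max_avoiding_def by blast

lemma subset_max_avoiding: "A \<in> \<A> \<Longrightarrow> y \<notin> A \<Longrightarrow> A \<subseteq> max_avoiding \<A> y"
  unfolding max_avoiding_def by blast

lemma max_avoiding_mem:
  assumes "finite \<A>" "union_closed \<A>" "A \<in> \<A>" "y \<notin> A"
  shows "max_avoiding \<A> y \<in> \<A>"
  unfolding max_avoiding_def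
  using assms by (intro union_closed_Union_mem) auto

lemma inj_on_max_avoiding:
  assumes "separating \<A>"
  shows "inj_on (max_avoiding \<A>) (\<Union>\<A>)"
proof (rule inj_onI, rule ccontr)
  fix y z assume "y \<in> \<Union>\<A>" "z \<in> \<Union>\<A>" and eq: "max_avoiding \<A> y = max_avoiding \<A> z"
    and "y \<noteq> z"
  then obtain A where "A \<in> \<A>" "(y \<in> A \<and> z \<notin> A) \<or> (z \<in> A \<and> y \<notin> A)"
    using assms unfolding separating_def by blast
  then show False
  proof (elim disjE conjE)
    assume "y \<in> A" "z \<notin> A"
    then show False
      using \<open>A \<in> \<A>\<close> eq subset_max_avoiding[of A \<A> z] not_mem_max_avoiding[of y] by blast
  next
    assume "z \<in> A" "y \<notin> A"
    then show False
      using \<open>A \<in> \<A>\<close> eq subset_max_avoiding[of A \<A> y] not_mem_max_avoiding[of z] by blast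
  qed
qed

lemma mem_max_avoiding_of_minimal:
  assumes "finite \<A>" "union_closed \<A>" "separating \<A>" "finite (\<Union>\<A>)"
    and no_common: "\<forall>y\<in>\<Union>\<A>. \<exists>A\<in>\<A>. y \<notin> A"
    and "x \<in> \<Union>\<A>" "y \<in> \<Union>\<A>" "y \<noteq> x"
    and minimal: "card (max_avoiding \<A> x) \<le> card (max_avoiding \<A> y)"
  shows "x \<in> max_avoiding \<A> y"
proof (rule ccontr)
  let ?B = "max_avoiding \<A>"
  have mem: "?B z \<in> \<A>" if z: "z \<in> \<Union>\<A>" for z
  proof -
    obtain A where "A \<in> \<A>" "z \<notin> A" using no_common z by blast
    then show ?thesis by (rule max_avoiding_mem[OF assms(1,2)])
  qed
  assume "x \<notin> ?B y"
  have "finite (?B x)"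
    using mem[OF \<open>x \<in> \<Union>\<A>\<close>] \<open>finite (\<Union>\<A>)\<close> by (meson Union_upper finite_subset)
  moreover have "?B y \<subseteq> ?B x"
    using mem[OF \<open>y \<in> \<Union>\<A>\<close>] \<open>x \<notin> ?B y\<close> by (rule subset_max_avoiding)
  ultimately have "?B y = ?B x"
    using minimal by (rule card_seteq)
  with inj_on_max_avoiding[OF \<open>separating \<A>\<close>] have "y = x"
    using \<open>y \<in> \<Union>\<A>\<close> \<open>x \<in> \<Union>\<A>\<close> by (rule inj_onD)
  with \<open>y \<noteq> x\<close> show False by contradiction
qed

lemma exists_mem_card_Union_le_card_containing:
  assumes "finite \<A>" "union_closed \<A>" "separating \<A>" "finite (\<Union>\<A>)" "\<Union>\<A> \<noteq> {}"
    and no_common: "\<forall>y\<in>\<Union>\<A>. \<exists>A\<in>\<A>. y \<notin> A"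
  shows "\<exists>x\<in>\<Union>\<A>. card (\<Union>\<A>) \<le> card {A \<in> \<A>. x \<in> A}"
proof -
  let ?U = "\<Union>\<A>" and ?B = "max_avoiding \<A>"
  obtain x where x: "x \<in> ?U" and minimal: "\<And>y. y \<in> ?U \<Longrightarrow> card (?B x) \<le> card (?B y)"
    using \<open>?U \<noteq> {}\<close> ex_has_least_nat[of "\<lambda>y. y \<in> ?U" _ "\<lambda>y. card (?B y)"] by blast
  have "?U \<in> \<A>"
    using union_closed_Union_mem[OF assms(2,1)] \<open>?U \<noteq> {}\<close> by auto
  moreover have "?B y \<in> \<A> \<and> x \<in> ?B y" if y: "y \<in> ?U - {x}" for y
  proof
    obtain A where "A \<in> \<A>" "y \<notin> A" using no_common y by blast
    then show "?B y \<in> \<A>" by (rule max_avoiding_mem[OF assms(1,2)])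
    show "x \<in> ?B y"
      using y minimal by (intro mem_max_avoiding_of_minimal[OF assms(1-4) no_common x]) auto
  qed
  ultimately have "insert ?U (?B ` (?U - {x})) \<subseteq> {A \<in> \<A>. x \<in> A}"
    using x by auto
  then have "card (insert ?U (?B ` (?U - {x}))) \<le> card {A \<in> \<A>. x \<in> A}"
    using \<open>finite \<A>\<close> by (intro card_mono) auto
  moreover have "card (?B ` (?U - {x})) = card ?U - 1"
    using inj_on_max_avoiding[OF \<open>separating \<A>\<close>] x \<open>finite ?U\<close>
    by (subst card_image) (auto intro: inj_on_subset)
  moreover have "?U \<notin> ?B ` (?U - {x})"
  proof
    assume "?U \<in> ?B ` (?U - {x})"
    then obtain y where "y \<in> ?U" "?U = ?B y" by blast
    then show False using not_mem_max_avoiding[of y \<A>] by simp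
  qed
  ultimately have "card ?U \<le> card {A \<in> \<A>. x \<in> A}"
    using \<open>finite ?U\<close> \<open>?U \<noteq> {}\<close> by (simp add: card_gt_0_iff)
  with x show ?thesis ..
qed

theorem mainTheorem2:
  fixes \<A> :: "'a set set" and m :: nat
  assumes "finite \<A>" and "union_closed \<A>" and "separating \<A>"
    and "finite (\<Union>\<A>)" and "card (\<Union>\<A>) = m" and "m \<ge> 1"
    and "card \<A> \<le> 2 * m"
  shows "\<exists>x\<in>\<Union>\<A>. 2 * card {A \<in> \<A>. x \<in> A} \<ge> card \<A>"
proof (cases "\<exists>y\<in>\<Union>\<A>. \<forall>A\<in>\<A>. y \<in> A")
  case True
  then obtain y where y: "y \<in> \<Union>\<A>" and "{A \<in> \<A>. y \<in> A} = \<A>" by blast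
  then have "card \<A> \<le> 2 * card {A \<in> \<A>. y \<in> A}" by simp
  with y show ?thesis ..
next
  case False
  have "\<Union>\<A> \<noteq> {}" using assms(5,6) by (metis card.empty not_one_le_zero)
  moreover have "\<forall>y\<in>\<Union>\<A>. \<exists>A\<in>\<A>. y \<notin> A" using False by blast
  ultimately obtain x where x: "x \<in> \<Union>\<A>" and "m \<le> card {A \<in> \<A>. x \<in> A}"
    using exists_mem_card_Union_le_card_containing[OF assms(1-4)] unfolding assms(5) by blast
  then have "card \<A> \<le> 2 * card {A \<in> \<A>. x \<in> A}" using assms(7) by linarith
  with x show ?thesis ..
qed

end
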